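(* Let $0<\lambda\le\Lambda$ and let $u\in C(\overline{Q_1})$ be a (viscosity) solution of $u_t-a_{ij}(x,t)u_{ij}=0$ in $Q_1$, where the measurable coefficients satisfy $\lambda I\le(a_{ij}(x,t))\le\Lambda I$ in $Q_1$. Let $A>0$ and assume that for every $t\in[-1,0]$, $$\operatorname{osc}_{x\in B_1}u(x,t)\le A.$$ Then $\operatorname{osc}_{Q_1}u\le CA$, where $C>0$ depends only on $\Lambda$ and $n$.
   Context: $\operatorname{osc}_E u=\sup_E u-\inf_E u$. $B_1$ is the unit ball of $\mathbb{R}^n$ centered at $0$, $Q_1=B_1\times(-1,0]$; $u_{ij}=\partial_{x_ix_j}u$, summation over repeated indices. *)

theory Defs
  imports "HOL-Analysis.Analysis"
begin

definition osc :: "'a set \<Rightarrow> ('a \<Rightarrow> real) \<Rightarrow> real" where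
  "osc E f = (SUP e\<in>E. f e) - (INF e\<in>E. f e)"

definition Q1 :: "((real^'n) \<times> real) set" where
  "Q1 = ball 0 1 \<times> {-1<..0}"

definition Q1_closure :: "((real^'n) \<times> real) set" where
  "Q1_closure = cball 0 1 \<times> {-1..0}"

text \<open>Parabolic second order superjet (Crandall--Ishii--Lions) of u at (x,t) relative to S:
  (q,p,X) with X symmetric such that
  u(y,s) <= u(x,t) + q(s-t) + p.(y-x) + 1/2 (y-x).X(y-x) + o(|y-x|^2+|s-t|) as (y,s) -> (x,t) in S.\<close>
definition parab_superjet ::
  "((real^'n) \<times> real) set \<Rightarrow> (real^'n \<Rightarrow> real \<Rightarrow> real) \<Rightarrow> real^'n \<Rightarrow> real
     \<Rightarrow> (real \<times> (real^'n) \<times> (real^'n^'n)) set" where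
  "parab_superjet S u x t = {(q, p, X). transpose X = X \<and>
     (\<forall>\<epsilon>>0. eventually (\<lambda>(y, s). u y s \<le> u x t + q * (s - t) + p \<bullet> (y - x)
          + (1/2) * ((y - x) \<bullet> (X *v (y - x))) + \<epsilon> * (norm (y - x)^2 + \<bar>s - t\<bar>))
        (at (x, t) within S))}"

definition parab_subjet ::
  "((real^'n) \<times> real) set \<Rightarrow> (real^'n \<Rightarrow> real \<Rightarrow> real) \<Rightarrow> real^'n \<Rightarrow> real
     \<Rightarrow> (real \<times> (real^'n) \<times> (real^'n^'n)) set" where
  "parab_subjet S u x t = {(q, p, X). transpose X = X \<and>
     (\<forall>\<epsilon>>0. eventually (\<lambda>(y, s). u y s \<ge> u x t + q * (s - t) + p \<bullet> (y - x)
          + (1/2) * ((y - x) \<bullet> (X *v (y - x))) - \<epsilon> * (norm (y - x)^2 + \<bar>s - t\<bar>))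
        (at (x, t) within S))}"

definition mat_pair :: "real^'n^'n \<Rightarrow> real^'n^'n \<Rightarrow> real" where
  "mat_pair a X = (\<Sum>i\<in>UNIV. \<Sum>j\<in>UNIV. a $ i $ j * X $ i $ j)"

definition visc_solution ::
  "(real^'n \<Rightarrow> real \<Rightarrow> real^'n^'n) \<Rightarrow> ((real^'n) \<times> real) set \<Rightarrow> (real^'n \<Rightarrow> real \<Rightarrow> real) \<Rightarrow> bool" where
  "visc_solution a S u \<longleftrightarrow>
     continuous_on S (\<lambda>(x, t). u x t) \<and>
     (\<forall>(x, t)\<in>S. \<forall>(q, p, X)\<in>parab_superjet S u x t. q - mat_pair (a x t) X \<le> 0) \<and>
     (\<forall>(x, t)\<in>S. \<forall>(q, p, X)\<in>parab_subjet S u x t. q - mat_pair (a x t) X \<ge> 0)"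

definition unif_elliptic :: "real \<Rightarrow> real \<Rightarrow> real^'n^'n \<Rightarrow> bool" where
  "unif_elliptic l L a \<longleftrightarrow> transpose a = a \<and>
     (\<forall>\<xi>. l * norm \<xi> ^ 2 \<le> \<xi> \<bullet> (a *v \<xi>) \<and> \<xi> \<bullet> (a *v \<xi>) \<le> L * norm \<xi> ^ 2)"

end

theory Submission
  imports Defs
begin

text \<open>Fix a time \<open>t\<^sub>1\<close> and compare \<open>u\<close> on \<open>B\<^sub>1\<^sub>/\<^sub>2 \<times> [t\<^sub>1, 0]\<close> with the barrier
  \<open>\<gamma> t + \<beta> |x|\<^sup>2\<close>, where \<open>\<beta> = 8A\<close> and \<open>\<gamma> = 2\<beta>n\<Lambda> + A\<close>. The maximum of \<open>u\<close> minus the barrier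
  cannot lie on the lateral boundary \<open>|x| = 1/2\<close>, since there \<open>\<beta>|x|\<^sup>2 = 2A\<close> exceeds the spatial
  oscillation; nor at a point with \<open>t > t\<^sub>1\<close>, since the barrier would touch \<open>u\<close> from above and the
  subsolution inequality would give \<open>\<gamma> \<le> 2\<beta> tr a \<le> 2\<beta>n\<Lambda>\<close>. Hence it lies at \<open>t = t\<^sub>1\<close>, which
  bounds the growth of \<open>u(0,\<cdot>)\<close> forward in time by \<open>(16n\<Lambda> + 2)A\<close>. Applied to \<open>-u\<close> this bounds
  the oscillation of \<open>u(0,\<cdot>)\<close>, and the spatial oscillation bound at two times does the rest.\<close>

lemma mat_matrix_vector_mult: "(mat c :: 'a::comm_semiring_1^'n^'n) *v v = c *s v"
  by (simp add: vec_eq_iff matrix_vector_mult_def mat_def if_distrib[where f="\<lambda>x. x * _"] cong: if_cong)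

lemma uminus_matrix_vector_mult: "(- X :: 'a::ring_1^'n^'m) *v v = - (X *v v)"
  by (simp add: vec_eq_iff matrix_vector_mult_def sum_negf)

lemma transpose_uminus: "transpose (- X :: 'a::ring_1^'n^'m) = - transpose X"
  by (simp add: vec_eq_iff transpose_def)

lemma mat_pair_uminus_right: "mat_pair a (- X) = - mat_pair a X"
  by (simp add: mat_pair_def sum_negf)

lemma mat_pair_mat: "mat_pair a (mat c) = c * trace a"
  by (simp add: mat_pair_def trace_def mat_def sum_distrib_left if_distrib cong: if_cong)
     (simp add: mult.commute)

lemma trace_le_of_unif_elliptic:
  assumes "unif_elliptic l L (a::real^'n^'n)"
  shows "trace a \<le> real CARD('n) * L"
proof -
  have "a $ i $ i \<le> L" for i
  proof -
    have "axis i 1 \<bullet> (a *v axis i 1) = a $ i $ i"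
      by (simp only: inner_axis')
         (simp add: matrix_vector_mult_def axis_def if_distrib[where f="\<lambda>x. _ * x"] cong: if_cong)
    moreover have "axis i 1 \<bullet> (a *v axis i 1) \<le> L * norm (axis i (1::real)) ^ 2"
      using assms unfolding unif_elliptic_def by blast
    ultimately show ?thesis by simp
  qed
  then have "trace a \<le> (\<Sum>i\<in>(UNIV::'n set). L)"
    unfolding trace_def by (intro sum_mono) auto
  then show ?thesis by simp
qed

lemma parab_superjet_uminus:
  assumes "(q, p, X) \<in> parab_superjet S (\<lambda>x t. - u x t) x t"
  shows "(- q, - p, - X) \<in> parab_subjet S u x t"
  using assms unfolding parab_superjet_def parab_subjet_def
  by (auto simp: transpose_uminus uminus_matrix_vector_mult elim!: eventually_mono)

lemma parab_subjet_uminus: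
  assumes "(q, p, X) \<in> parab_subjet S (\<lambda>x t. - u x t) x t"
  shows "(- q, - p, - X) \<in> parab_superjet S u x t"
  using assms unfolding parab_superjet_def parab_subjet_def
  by (auto simp: transpose_uminus uminus_matrix_vector_mult elim!: eventually_mono)

lemma visc_solution_uminus:
  assumes "visc_solution a S u"
  shows "visc_solution a S (\<lambda>x t. - u x t)"
proof -
  have "continuous_on S (\<lambda>(x, t). u x t)"
    using assms unfolding visc_solution_def by blast
  then have "continuous_on S (\<lambda>(x, t). - u x t)"
    using continuous_on_minus by (fastforce simp: case_prod_unfold)
  moreover have "q - mat_pair (a x t) X \<le> 0"
    if "(x, t) \<in> S" "(q, p, X) \<in> parab_superjet S (\<lambda>x t. - u x t) x t" for x t q p X
    using assms that parab_superjet_uminus[OF that(2)]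
    unfolding visc_solution_def by (fastforce simp: mat_pair_uminus_right)
  moreover have "q - mat_pair (a x t) X \<ge> 0"
    if "(x, t) \<in> S" "(q, p, X) \<in> parab_subjet S (\<lambda>x t. - u x t) x t" for x t q p X
    using assms that parab_subjet_uminus[OF that(2)]
    unfolding visc_solution_def by (fastforce simp: mat_pair_uminus_right)
  ultimately show ?thesis
    unfolding visc_solution_def by blast
qed

lemma norm_power2_diff_eq:
  "norm (y::'a::real_inner) ^ 2 - norm x ^ 2 = 2 * (x \<bullet> (y - x)) + norm (y - x) ^ 2"
  by (simp add: power2_norm_eq_inner inner_diff_left inner_diff_right inner_commute algebra_simps)

lemma paraboloid_in_parab_superjet:
  fixes u :: "real^'n \<Rightarrow> real \<Rightarrow> real"
  assumes "open U" "(x0, t0) \<in> U"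
    and max: "\<And>y s. (y, s) \<in> S \<Longrightarrow> (y, s) \<in> U \<Longrightarrow>
      u y s - (\<gamma> * s + \<beta> * norm y ^ 2) \<le> u x0 t0 - (\<gamma> * t0 + \<beta> * norm x0 ^ 2)"
  shows "(\<gamma>, (2 * \<beta>) *s x0, mat (2 * \<beta>)) \<in> parab_superjet S u x0 t0"
proof -
  have taylor: "u y s \<le> u x0 t0 + \<gamma> * (s - t0) + ((2 * \<beta>) *s x0) \<bullet> (y - x0)
      + 1/2 * ((y - x0) \<bullet> (mat (2 * \<beta>) *v (y - x0))) + \<epsilon> * (norm (y - x0) ^ 2 + \<bar>s - t0\<bar>)"
    if "(y, s) \<in> S" "(y, s) \<in> U" "\<epsilon> > 0" for y s \<epsilon>
  proof -
    have "u y s \<le> u x0 t0 + \<gamma> * (s - t0) + \<beta> * (norm y ^ 2 - norm x0 ^ 2)"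
      using max[OF that(1,2)] by (simp add: algebra_simps)
    also have "\<beta> * (norm y ^ 2 - norm x0 ^ 2) = ((2 * \<beta>) *s x0) \<bullet> (y - x0)
        + 1/2 * ((y - x0) \<bullet> (mat (2 * \<beta>) *v (y - x0)))"
      unfolding mat_matrix_vector_mult norm_power2_diff_eq
      by (simp add: power2_norm_eq_inner scalar_mult_eq_scaleR algebra_simps)
    finally show ?thesis
      using \<open>\<epsilon> > 0\<close> by (simp add: add_increasing2)
  qed
  have "\<forall>\<^sub>F w in nhds (x0, t0). w \<in> U"
    using assms(1,2) by (rule eventually_nhds_in_open)
  then have "\<forall>\<^sub>F (y, s) in at (x0, t0) within S.
      u y s \<le> u x0 t0 + \<gamma> * (s - t0) + ((2 * \<beta>) *s x0) \<bullet> (y - x0)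
        + 1/2 * ((y - x0) \<bullet> (mat (2 * \<beta>) *v (y - x0))) + \<epsilon> * (norm (y - x0) ^ 2 + \<bar>s - t0\<bar>)"
    if "\<epsilon> > 0" for \<epsilon>
    unfolding eventually_at_filter
    by (rule eventually_mono) (use taylor that in auto)
  then show ?thesis
    unfolding parab_superjet_def by (simp add: transpose_mat)
qed

lemma visc_solution_paraboloid_max:
  assumes "visc_solution a S u" "(x0, t0) \<in> S" "open U" "(x0, t0) \<in> U"
    and "\<And>y s. (y, s) \<in> S \<Longrightarrow> (y, s) \<in> U \<Longrightarrow>
      u y s - (\<gamma> * s + \<beta> * norm y ^ 2) \<le> u x0 t0 - (\<gamma> * t0 + \<beta> * norm x0 ^ 2)"
  shows "\<gamma> \<le> 2 * \<beta> * trace (a x0 t0)"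
proof -
  have "(\<gamma>, (2 * \<beta>) *s x0, mat (2 * \<beta>)) \<in> parab_superjet S u x0 t0"
    using assms(3-) by (rule paraboloid_in_parab_superjet)
  then have "\<gamma> - mat_pair (a x0 t0) (mat (2 * \<beta>)) \<le> 0"
    using assms(1,2) unfolding visc_solution_def by blast
  then show ?thesis
    by (simp add: mat_pair_mat)
qed

lemma visc_solution_paraboloid_max_at_initial_time:
  fixes u :: "real^'n \<Rightarrow> real \<Rightarrow> real"
  assumes vs: "visc_solution a Q1 u"
    and trace: "\<And>x t. (x, t) \<in> Q1 \<Longrightarrow> trace (a x t) \<le> M"
    and "2 * \<beta> * M < \<gamma>" "\<beta> \<ge> 0" "r \<le> 1" "-1 < t1"
    and x0t0: "norm x0 < r" "t1 \<le> t0" "t0 \<le> 0"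
    and max: "\<And>y s. (y, s) \<in> cball 0 r \<times> {t1..0} \<Longrightarrow>
      u y s - (\<gamma> * s + \<beta> * norm y ^ 2) \<le> u x0 t0 - (\<gamma> * t0 + \<beta> * norm x0 ^ 2)"
  shows "t0 = t1"
proof (rule ccontr)
  assume "t0 \<noteq> t1"
  have in_Q1: "(x0, t0) \<in> Q1"
    using x0t0 \<open>r \<le> 1\<close> \<open>-1 < t1\<close> by (simp add: Q1_def)
  have "\<gamma> \<le> 2 * \<beta> * trace (a x0 t0)"
  proof (rule visc_solution_paraboloid_max[OF vs in_Q1, where U = "ball 0 r \<times> {t1<..}"])
    show "(x0, t0) \<in> ball 0 r \<times> {t1<..}"
      using x0t0 \<open>t0 \<noteq> t1\<close> by simp
  qed (use max in \<open>auto intro: open_Times simp: Q1_def\<close>)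
  also have "\<dots> \<le> 2 * \<beta> * M"
    using trace[OF in_Q1] \<open>\<beta> \<ge> 0\<close> by (simp add: mult_left_mono)
  finally show False
    using \<open>2 * \<beta> * M < \<gamma>\<close> by simp
qed

lemma visc_solution_forward_bound:
  fixes u :: "real^'n \<Rightarrow> real \<Rightarrow> real"
  assumes vs: "visc_solution a Q1 u"
    and trace: "\<And>x t. (x, t) \<in> Q1 \<Longrightarrow> trace (a x t) \<le> M" and "M \<ge> 0"
    and "A > 0"
    and spatial: "\<And>t x y. t \<in> {-1<..0} \<Longrightarrow> x \<in> ball 0 1 \<Longrightarrow> y \<in> ball 0 1 \<Longrightarrow> u x t - u y t \<le> A"
    and t1: "-1 < t1" "t1 \<le> s" "s \<le> 0"
  shows "u 0 s - u 0 t1 \<le> (16 * M + 2) * A"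
proof -
  define \<beta> where "\<beta> = 8 * A"
  define \<gamma> where "\<gamma> = 16 * M * A + A"
  define g where "g = (\<lambda>(y, s). u y s - (\<gamma> * s + \<beta> * norm y ^ 2))"
  define K where "K = cball (0::real^'n) (1/2) \<times> {t1..0}"
  have KQ: "K \<subseteq> Q1"
    using t1 unfolding K_def Q1_def by (auto simp: dist_norm)
  have "continuous_on Q1 (\<lambda>z. u (fst z) (snd z))"
    using vs unfolding visc_solution_def by (simp add: case_prod_unfold)
  then have "continuous_on K g"
    unfolding g_def case_prod_unfold by (intro continuous_intros continuous_on_subset[OF _ KQ])
  moreover have "compact K" "K \<noteq> {}"
    using t1 unfolding K_def by (auto intro: compact_Times)
  ultimately obtain x0 t0 where z: "(x0, t0) \<in> K" and max: "\<And>w. w \<in> K \<Longrightarrow> g w \<le> g (x0, t0)"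
    using continuous_attains_sup by (metis surj_pair)
  have t0: "t1 \<le> t0" "t0 \<le> 0" and "norm x0 \<le> 1/2"
    using z unfolding K_def by auto
  have interior: "norm x0 < 1/2"
  proof (rule ccontr)
    assume "\<not> norm x0 < 1/2"
    with \<open>norm x0 \<le> 1/2\<close> have "norm x0 = 1/2" by simp
    have "\<beta> * norm x0 ^ 2 = 2 * A"
      unfolding \<open>norm x0 = 1/2\<close> \<beta>_def by (simp add: power2_eq_square)
    moreover have "u x0 t0 - u 0 t0 \<le> A"
      using spatial t0 t1 \<open>norm x0 \<le> 1/2\<close> by simp
    moreover have "g (0, t0) \<le> g (x0, t0)"
      using t0 by (intro max) (simp add: K_def)
    ultimately show False
      using \<open>A > 0\<close> by (simp add: g_def)
  qed
  have bottom: "t0 = t1"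
  proof (rule visc_solution_paraboloid_max_at_initial_time[OF vs trace _ _ _ t1(1) interior t0])
    show "2 * \<beta> * M < \<gamma>" "\<beta> \<ge> 0"
      using \<open>M \<ge> 0\<close> \<open>A > 0\<close> by (auto simp: \<beta>_def \<gamma>_def)
    show "u y s - (\<gamma> * s + \<beta> * norm y ^ 2) \<le> u x0 t0 - (\<gamma> * t0 + \<beta> * norm x0 ^ 2)"
      if "(y, s) \<in> cball 0 (1/2) \<times> {t1..0}" for y s
      using max[of "(y, s)"] that by (simp add: g_def K_def)
  qed simp_all
  have "g (0, s) \<le> g (x0, t1)"
    using max[of "(0, s)"] t1 bottom by (simp add: K_def)
  also have "\<dots> \<le> u 0 t1 + A - \<gamma> * t1"
  proof -
    have "0 \<le> \<beta> * norm x0 ^ 2" using \<open>A > 0\<close> by (simp add: \<beta>_def)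
    then show ?thesis
      using spatial[of t1 x0 0] t1 \<open>norm x0 \<le> 1/2\<close> by (simp add: g_def)
  qed
  finally have "u 0 s - u 0 t1 \<le> A + \<gamma> * (s - t1)"
    by (simp add: g_def algebra_simps)
  also have "\<gamma> * (s - t1) \<le> \<gamma>"
  proof -
    have "\<gamma> \<ge> 0" using \<open>M \<ge> 0\<close> \<open>A > 0\<close> by (simp add: \<gamma>_def)
    then show ?thesis using t1 by (simp add: mult_left_le)
  qed
  finally show ?thesis
    by (simp add: \<gamma>_def algebra_simps)
qed

lemma visc_solution_center_diff:
  fixes u :: "real^'n \<Rightarrow> real \<Rightarrow> real"
  assumes vs: "visc_solution a Q1 u"
    and trace: "\<And>x t. (x, t) \<in> Q1 \<Longrightarrow> trace (a x t) \<le> M" and "M \<ge> 0"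
    and "A > 0"
    and spatial: "\<And>t x y. t \<in> {-1<..0} \<Longrightarrow> x \<in> ball 0 1 \<Longrightarrow> y \<in> ball 0 1 \<Longrightarrow> u x t - u y t \<le> A"
    and "s \<in> {-1<..0}" "t \<in> {-1<..0}"
  shows "u 0 t - u 0 s \<le> (16 * M + 2) * A"
proof (cases "s \<le> t")
  case True
  then show ?thesis
    using visc_solution_forward_bound[OF vs trace \<open>M \<ge> 0\<close> \<open>A > 0\<close> spatial] assms(6,7) by simp
next
  case False
  have "- u x t - - u y t \<le> A" if "t \<in> {-1<..0}" "x \<in> ball 0 1" "y \<in> ball 0 1" for t x y
    using spatial[OF that(1,3,2)] by simp
  from visc_solution_forward_bound[OF visc_solution_uminus[OF vs] trace \<open>M \<ge> 0\<close> \<open>A > 0\<close> this]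
  show ?thesis
    using False assms(6,7) by simp
qed

lemma diff_le_osc:
  assumes "bdd_above (f ` S)" "bdd_below (f ` S)" "x \<in> S" "y \<in> S"
  shows "f x - f y \<le> osc S f"
proof -
  have "f x \<le> (SUP z\<in>S. f z)"
    using assms(1,3) by (rule cSUP_upper2) simp
  moreover have "(INF z\<in>S. f z) \<le> f y"
    using assms(2,4) by (rule cINF_lower2) simp
  ultimately show ?thesis
    unfolding osc_def by linarith
qed

lemma osc_le:
  assumes "S \<noteq> {}" and "\<And>x y. x \<in> S \<Longrightarrow> y \<in> S \<Longrightarrow> f x - f y \<le> (K::real)"
  shows "osc S f \<le> K"
proof -
  have "f x - K \<le> (INF y\<in>S. f y)" if "x \<in> S" for x
    using assms that by (intro cINF_greatest) (auto simp: algebra_simps)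
  then have "(SUP x\<in>S. f x) \<le> (INF y\<in>S. f y) + K"
    using assms(1) by (intro cSUP_least) (auto simp: algebra_simps)
  then show ?thesis
    unfolding osc_def by simp
qed

lemma spatial_diff_le_of_osc:
  fixes u :: "real^'n \<Rightarrow> real \<Rightarrow> real"
  assumes "continuous_on Q1_closure (\<lambda>(x, t). u x t)"
    and "\<forall>t\<in>{-1..0}. osc (ball 0 1) (\<lambda>x. u x t) \<le> A"
    and "t \<in> {-1<..0}" "x \<in> ball 0 1" "y \<in> ball 0 1"
  shows "u x t - u y t \<le> A"
proof -
  have "compact (Q1_closure :: ((real^'n) \<times> real) set)"
    unfolding Q1_closure_def by (intro compact_Times compact_cball compact_Icc)
  then have "bounded ((\<lambda>(x, t). u x t) ` Q1_closure)"
    using assms(1) by (intro compact_imp_bounded compact_continuous_image)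
  moreover have "(\<lambda>x. u x t) ` ball 0 1 \<subseteq> (\<lambda>(x, t). u x t) ` Q1_closure"
    using assms(3) by (auto simp: Q1_closure_def)
  ultimately have "bounded ((\<lambda>x. u x t) ` ball 0 1)"
    using bounded_subset by blast
  then have "u x t - u y t \<le> osc (ball 0 1) (\<lambda>x. u x t)"
    using assms(4,5) by (intro diff_le_osc) (auto intro: bounded_imp_bdd_above bounded_imp_bdd_below)
  moreover have "osc (ball 0 1) (\<lambda>x. u x t) \<le> A"
    using assms(2,3) by auto
  ultimately show ?thesis
    by linarith
qed

lemma osc_Q1_le:
  fixes u :: "real^'n \<Rightarrow> real \<Rightarrow> real"
  assumes spatial: "\<And>t x y. t \<in> {-1<..0} \<Longrightarrow> x \<in> ball 0 1 \<Longrightarrow> y \<in> ball 0 1 \<Longrightarrow> u x t - u y t \<le> A"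
    and center: "\<And>s t. s \<in> {-1<..0} \<Longrightarrow> t \<in> {-1<..0} \<Longrightarrow> u 0 t - u 0 s \<le> B"
  shows "osc Q1 (\<lambda>(x, t). u x t) \<le> 2 * A + B"
proof (rule osc_le)
  show "Q1 \<noteq> ({} :: ((real^'n) \<times> real) set)"
    unfolding Q1_def by (auto intro: exI[of _ "(0, 0)"])
  fix z w :: "(real^'n) \<times> real"
  assume "z \<in> Q1" "w \<in> Q1"
  then obtain x t y s where zw: "z = (x, t)" "w = (y, s)" and
    "x \<in> ball 0 1" "t \<in> {-1<..0}" "y \<in> ball 0 1" "s \<in> {-1<..0}"
    unfolding Q1_def by auto
  then have "u x t - u 0 t \<le> A" "u 0 t - u 0 s \<le> B" "u 0 s - u y s \<le> A"
    using spatial center by auto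
  then show "(\<lambda>(x, t). u x t) z - (\<lambda>(x, t). u x t) w \<le> 2 * A + B"
    unfolding zw by simp
qed

theorem lemma4p3:
  fixes \<Lambda> :: real
  assumes "\<Lambda> > 0"
  shows "\<exists>C>0. \<forall>(lam::real) (a :: real^'n \<Rightarrow> real \<Rightarrow> real^'n^'n) (u :: real^'n \<Rightarrow> real \<Rightarrow> real) (A::real).
     0 < lam \<longrightarrow> lam \<le> \<Lambda> \<longrightarrow>
     (\<forall>i j. set_borel_measurable lebesgue Q1 (\<lambda>z. a (fst z) (snd z) $ i $ j)) \<longrightarrow>
     (\<forall>(x, t)\<in>Q1. unif_elliptic lam \<Lambda> (a x t)) \<longrightarrow>
     continuous_on Q1_closure (\<lambda>(x, t). u x t) \<longrightarrow>
     visc_solution a Q1 u \<longrightarrow>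
     A > 0 \<longrightarrow>
     (\<forall>t\<in>{-1..0}. osc (ball 0 1) (\<lambda>x. u x t) \<le> A) \<longrightarrow>
     osc Q1 (\<lambda>(x, t). u x t) \<le> C * A"
proof (intro exI[of _ "16 * real CARD('n) * \<Lambda> + 4"] conjI allI impI)
  define M where "M = real CARD('n) * \<Lambda>"
  have "M \<ge> 0"
    using assms by (simp add: M_def)
  then show "16 * real CARD('n) * \<Lambda> + 4 > 0"
    by (simp add: M_def)
  fix lam a A and u :: "real^'n \<Rightarrow> real \<Rightarrow> real"
  assume ell: "\<forall>(x, t)\<in>Q1. unif_elliptic lam \<Lambda> (a x t)"
    and cont: "continuous_on Q1_closure (\<lambda>(x, t). u x t)" and vs: "visc_solution a Q1 u"
    and "A > 0" and osc: "\<forall>t\<in>{-1..0}. osc (ball 0 1) (\<lambda>x. u x t) \<le> A"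
  have trace: "trace (a x t) \<le> M" if "(x, t) \<in> Q1" for x t
    using ell that trace_le_of_unif_elliptic unfolding M_def by fastforce
  note spatial = spatial_diff_le_of_osc[OF cont osc]
  have "osc Q1 (\<lambda>(x, t). u x t) \<le> 2 * A + (16 * M + 2) * A"
    by (intro osc_Q1_le spatial visc_solution_center_diff[OF vs trace \<open>M \<ge> 0\<close> \<open>A > 0\<close>])
  then show "osc Q1 (\<lambda>(x, t). u x t) \<le> (16 * real CARD('n) * \<Lambda> + 4) * A"
    by (simp add: M_def algebra_simps)
qed

end
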